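(* Let $\zeta$ be the Riemann zeta function. For every non-negative integer $n$, $$\lim_{x\to 0^+}\frac{2\ln(n!\,x)+\ln|\Gamma(-n-x)|+\ln|\Gamma(-n+x)|}{x^2}=\zeta(2)+\sum_{k=1}^n\frac{1}{k^2}.$$
   Context: $\Gamma$ is Euler's Gamma function on the real line. *)

theory Defs
  imports "HOL-Analysis.Analysis"
begin

text \<open>Riemann zeta function at 2, by its defining Dirichlet series
  zeta(2) = sum over k >= 1 of 1/k^2 (the only value of zeta the statement uses).\<close>
definition zeta2 :: real where
  "zeta2 = (\<Sum>k. 1 / (real (Suc k))^2)"

end

theory Submission imports Defs "HOL-Real_Asymp.Real_Asymp" begin

text \<open>
  Applying \<open>\<Gamma>(z + 1) = z \<Gamma>(z)\<close> \<open>n\<close> times to each factor and then Euler's reflection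
  formula gives, for \<open>0 < x < 1\<close>,
  \<open>(n! x)\<^sup>2 \<bar>\<Gamma>(-n-x) \<Gamma>(-n+x)\<bar> = (\<pi> x / sin (\<pi> x)) / (\<Prod>j=1..n. 1 - x\<^sup>2/j\<^sup>2)\<close>.
  After taking logarithms, \<open>ln (\<pi> x / sin (\<pi> x)) \<sim> \<pi>\<^sup>2 x\<^sup>2 / 6 = \<zeta>(2) x\<^sup>2\<close> and
  \<open>ln (1 - x\<^sup>2/j\<^sup>2) \<sim> -x\<^sup>2/j\<^sup>2\<close> give the limit.
\<close>

lemma zeta2_eq: "zeta2 = pi\<^sup>2 / 6"
  unfolding zeta2_def using inverse_squares_sums by (simp add: sums_iff add.commute)

lemma Gamma_reflection_real':
  fixes x :: real
  shows "Gamma x * Gamma (- x) = - pi / (x * sin (pi * x))"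
proof -
  have "complex_of_real (Gamma x * Gamma (- x)) = Gamma (complex_of_real x) * Gamma (- complex_of_real x)"
    by (simp add: Gamma_complex_of_real flip: of_real_minus)
  also have "\<dots> = - of_real pi / (of_real x * sin (of_real pi * of_real x))"
    by (rule Gamma_reflection_complex')
  also have "\<dots> = complex_of_real (- pi / (x * sin (pi * x)))"
    by (simp flip: sin_of_real)
  finally show ?thesis
    by (simp only: of_real_eq_iff)
qed

lemma Gamma_minus_nat_pair:
  fixes x :: real
  assumes "x \<notin> \<int>"
  shows "Gamma (- real n - x) * Gamma (- real n + x) * (\<Prod>j=1..n. (real j)\<^sup>2 - x\<^sup>2)
           = Gamma x * Gamma (- x)"
proof (induction n)
  case 0
  show ?case by (simp add: mult.commute)
next
  case (Suc n)
  have not_int: "- real (Suc n) - x \<notin> \<int>" "- real (Suc n) + x \<notin> \<int>"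
    using assms Ints_diff[of "- real (Suc n)" "- real (Suc n) - x"]
      Ints_add[of "- real (Suc n) + x" "real (Suc n)"] by auto
  have "Gamma (- real n - x) = Gamma ((- real (Suc n) - x) + 1)"
    by (rule arg_cong[where f = Gamma]) simp
  also have "\<dots> = (- real (Suc n) - x) * Gamma (- real (Suc n) - x)"
    using not_int(1) by (intro Gamma_plus1 not_in_Ints_imp_not_in_nonpos_Ints)
  finally have step_minus: "Gamma (- real n - x) = (- real (Suc n) - x) * Gamma (- real (Suc n) - x)" .
  have "Gamma (- real n + x) = Gamma ((- real (Suc n) + x) + 1)"
    by (rule arg_cong[where f = Gamma]) simp
  also have "\<dots> = (- real (Suc n) + x) * Gamma (- real (Suc n) + x)"
    using not_int(2) by (intro Gamma_plus1 not_in_Ints_imp_not_in_nonpos_Ints)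
  finally have step_plus: "Gamma (- real n + x) = (- real (Suc n) + x) * Gamma (- real (Suc n) + x)" .
  have "(real (Suc n))\<^sup>2 - x\<^sup>2 = (- real (Suc n) - x) * (- real (Suc n) + x)"
    by (simp add: algebra_simps power2_eq_square)
  then show ?case
    using Suc.IH step_minus step_plus by (simp add: prod.cl_ivl_Suc mult_ac)
qed

lemma prod_squares_minus:
  fixes x :: real
  shows "(\<Prod>j=1..n. (real j)\<^sup>2 - x\<^sup>2) = (fact n)\<^sup>2 * (\<Prod>j=1..n. 1 - x\<^sup>2 / (real j)\<^sup>2)"
proof -
  have "(\<Prod>j=1..n. (real j)\<^sup>2 - x\<^sup>2) = (\<Prod>j=1..n. (real j)\<^sup>2 * (1 - x\<^sup>2 / (real j)\<^sup>2))"
    by (intro prod.cong) (auto simp: field_simps)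
  also have "\<dots> = (\<Prod>j=1..n. real j)\<^sup>2 * (\<Prod>j=1..n. 1 - x\<^sup>2 / (real j)\<^sup>2)"
    by (simp add: prod.distrib prod_power_distrib)
  finally show ?thesis
    by (simp add: fact_prod)
qed

lemma ln_Gamma_minus_nat_pair:
  fixes x :: real
  assumes "0 < x" "x < 1"
  shows "2 * ln (fact n * x) + ln \<bar>Gamma (- real n - x)\<bar> + ln \<bar>Gamma (- real n + x)\<bar>
           = ln (pi * x / sin (pi * x)) - (\<Sum>j=1..n. ln (1 - x\<^sup>2 / (real j)\<^sup>2))"
proof -
  define P where "P = (\<Prod>j=1..n. 1 - x\<^sup>2 / (real j)\<^sup>2)"
  have factor_pos: "1 - x\<^sup>2 / (real j)\<^sup>2 > 0" if "j \<in> {1..n}" for j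
  proof -
    have "x\<^sup>2 < (real j)\<^sup>2"
      using assms that by (intro power_strict_mono) auto
    then show ?thesis
      using that by (simp add: field_simps)
  qed
  have "P > 0"
    unfolding P_def using factor_pos by (rule prod_pos)
  have "sin (pi * x) > 0"
    using assms by (intro sin_gt_zero) auto
  have "x \<notin> \<int>"
    using assms by (auto elim: Ints_cases)
  have "(fact n * x)\<^sup>2 * (\<bar>Gamma (- real n - x)\<bar> * \<bar>Gamma (- real n + x)\<bar>) * P
          = x\<^sup>2 * \<bar>Gamma (- real n - x) * Gamma (- real n + x) * ((fact n)\<^sup>2 * P)\<bar>"
    using \<open>P > 0\<close> by (simp add: abs_mult power_mult_distrib mult_ac)
  also have "\<dots> = x\<^sup>2 * \<bar>Gamma (- real n - x) * Gamma (- real n + x) * (\<Prod>j=1..n. (real j)\<^sup>2 - x\<^sup>2)\<bar>"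
    by (simp only: P_def prod_squares_minus)
  also have "\<dots> = x\<^sup>2 * \<bar>pi / (x * sin (pi * x))\<bar>"
    by (simp only: Gamma_minus_nat_pair[OF \<open>x \<notin> \<int>\<close>] Gamma_reflection_real' divide_minus_left abs_minus_cancel)
  also have "\<dots> = pi * x / sin (pi * x)"
    using assms \<open>sin (pi * x) > 0\<close> by (simp add: power2_eq_square field_simps)
  finally have prod_eq:
    "(fact n * x)\<^sup>2 * (\<bar>Gamma (- real n - x)\<bar> * \<bar>Gamma (- real n + x)\<bar>) * P = pi * x / sin (pi * x)" .
  have "Gamma (- real n - x) \<noteq> 0" "Gamma (- real n + x) \<noteq> 0"
    using prod_eq assms \<open>sin (pi * x) > 0\<close> by auto
  then have "ln (pi * x / sin (pi * x))
      = 2 * ln (fact n * x) + ln \<bar>Gamma (- real n - x)\<bar> + ln \<bar>Gamma (- real n + x)\<bar> + ln P"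
    using assms \<open>P > 0\<close> by (simp flip: prod_eq add: ln_mult ln_realpow)
  moreover have "ln P = (\<Sum>j=1..n. ln (1 - x\<^sup>2 / (real j)\<^sup>2))"
    unfolding P_def by (intro ln_prod finite_atLeastAtMost) (metis factor_pos less_irrefl)
  ultimately show ?thesis by simp
qed

lemma ln_pi_x_over_sin_asymp:
  "((\<lambda>x::real. ln (pi * x / sin (pi * x)) / x\<^sup>2) \<longlongrightarrow> pi\<^sup>2 / 6) (at_right 0)"
proof -
  have "((\<lambda>x::real. ln (pi * x / sin (pi * x)) / x\<^sup>2)
          \<longlongrightarrow> pi * (inverse pi * (inverse pi * (pi * (pi * pi)))) / 6) (at_right 0)"
    by real_asymp
  then show ?thesis
    by (simp add: field_simps power2_eq_square)
qed

lemma ln_one_minus_square_asymp: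
  fixes c :: real
  assumes "c > 0"
  shows "((\<lambda>x::real. ln (1 - x\<^sup>2 / c\<^sup>2) / x\<^sup>2) \<longlongrightarrow> - 1 / c\<^sup>2) (at_right 0)"
proof -
  have "((\<lambda>x::real. ln (1 - x\<^sup>2 / c\<^sup>2) / x\<^sup>2) \<longlongrightarrow> - inverse (c\<^sup>2)) (at_right 0)"
    using assms by real_asymp
  then show ?thesis
    by (simp add: field_simps power2_eq_square)
qed

theorem mainTheorem4:
  fixes n :: nat
  shows "((\<lambda>x::real. (2 * ln (fact n * x) + ln \<bar>Gamma (- real n - x)\<bar>
            + ln \<bar>Gamma (- real n + x)\<bar>) / x^2)
          \<longlongrightarrow> zeta2 + (\<Sum>k=1..n. 1 / (real k)^2)) (at_right 0)"
proof -
  let ?g = "\<lambda>x::real. ln (pi * x / sin (pi * x)) / x\<^sup>2 - (\<Sum>j=1..n. ln (1 - x\<^sup>2 / (real j)\<^sup>2) / x\<^sup>2)"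
  have "(?g \<longlongrightarrow> pi\<^sup>2 / 6 - (\<Sum>j=1..n. - 1 / (real j)\<^sup>2)) (at_right 0)"
    by (intro tendsto_diff ln_pi_x_over_sin_asymp tendsto_sum ln_one_minus_square_asymp) auto
  then have "(?g \<longlongrightarrow> zeta2 + (\<Sum>k=1..n. 1 / (real k)^2)) (at_right 0)"
    by (simp add: zeta2_eq sum_negf)
  moreover have "eventually (\<lambda>x::real. x \<in> {0<..<1}) (at_right 0)"
    by (rule eventually_at_right_real) simp
  then have "eventually (\<lambda>x. ?g x = (2 * ln (fact n * x) + ln \<bar>Gamma (- real n - x)\<bar>
                + ln \<bar>Gamma (- real n + x)\<bar>) / x^2) (at_right 0)"
  proof eventually_elim
    case (elim x)
    then show ?case
      using ln_Gamma_minus_nat_pair[of x n] by (simp add: diff_divide_distrib sum_divide_distrib)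
  qed
  ultimately show ?thesis
    by (rule Lim_transform_eventually)
qed

end
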